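(* Let $\beta>1$ and $t\in[0,1)$. Then the following are equivalent: (i) $t\in K(t)$; (ii) $t\in E_\beta$; (iii) $t\in\mathcal U$.
   Context: Let $T_\beta\colon[0,1)\to[0,1)$, $T_\beta(x)=\beta x-\lfloor\beta x\rfloor$. For $0<t<1$ let $K(t)=\{x\in[0,1)\colon T_\beta^k(x)\notin(0,t)\text{ for all }k\ge0\}$; set $K(0)=[0,1)$ and $K(1)=\{0\}$. $E_\beta=\{t\in[0,1)\colon K(t')\neq K(t)\text{ for every }t'>t\}$. A parameter $t\in[0,1]$ is a bifurcation parameter if $t\in\{0,1\}$, or $0<t<1$ and for every $\delta>0$ there is $t'\in(t-\delta,t+\delta)$ with $K(t')\neq K(t)$. $\mathcal U$ denotes the set of bifurcation parameters in $[0,1)$. *)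

theory Defs
  imports Complex_Main
begin

definition Tb :: "real \<Rightarrow> real \<Rightarrow> real" where
  "Tb \<beta> x = \<beta> * x - of_int \<lfloor>\<beta> * x\<rfloor>"

definition Kset :: "real \<Rightarrow> real \<Rightarrow> real set" where
  "Kset \<beta> t =
     (if t = 0 then {0..<1}
      else if t = 1 then {0}
      else {x \<in> {0..<1}. \<forall>k::nat. (Tb \<beta> ^^ k) x \<notin> {0<..<t}})"

definition Ebeta :: "real \<Rightarrow> real set" where
  "Ebeta \<beta> = {t \<in> {0..<1}. \<forall>t'\<in>{0..1}. t' > t \<longrightarrow> Kset \<beta> t' \<noteq> Kset \<beta> t}"

definition bifurcation :: "real \<Rightarrow> real \<Rightarrow> bool" where
  "bifurcation \<beta> t \<longleftrightarrow> t \<in> {0..1} \<and>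
     (t = 0 \<or> t = 1 \<or>
      (\<forall>\<delta>>0. \<exists>t'\<in>{0..1}. t - \<delta> < t' \<and> t' < t + \<delta> \<and> Kset \<beta> t' \<noteq> Kset \<beta> t))"

definition Ubeta :: "real \<Rightarrow> real set" where
  "Ubeta \<beta> = {t \<in> {0..<1}. bifurcation \<beta> t}"

end

theory Submission
  imports Defs
begin

(* If t is in K(t), then t drops out of K(t') for every t' > t, so t lies in E_beta and hence is a
   bifurcation parameter. Conversely, if t > 0 and some iterate T^n(t) lies in (0,t), the orbit of t
   avoids 0 and hence the discontinuities of T (the preimages of 0), so T^n is continuous at t and maps
   a neighbourhood of t into (0, t - eta). Then an orbit enters (0,a) for one a near t iff it does for
   all a near t: K is locally constant at t. *)

lemma Kset_iff:
  assumes "0 < t" "t < 1"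
  shows "x \<in> Kset b t \<longleftrightarrow> x \<in> {0..<1} \<and> (\<forall>k. (Tb b ^^ k) x \<notin> {0<..<t})"
  using assms by (simp add: Kset_def)

lemma Tb_zero [simp]: "Tb b 0 = 0"
  by (simp add: Tb_def)

lemma isCont_Tb:
  assumes "Tb b y \<noteq> 0"
  shows "isCont (Tb b) y"
proof -
  have "b * y \<notin> \<int>"
  proof
    assume "b * y \<in> \<int>"
    then have "Tb b y = 0" by (auto simp: Tb_def elim: Ints_cases)
    with assms show False by simp
  qed
  then have "isCont (\<lambda>x. real_of_int \<lfloor>x\<rfloor>) (b * y)"
    using continuous_floor by (simp add: o_def)
  then have "isCont (\<lambda>x. real_of_int \<lfloor>b * x\<rfloor>) y"
    using continuous_at_compose[of y "\<lambda>x. b * x"] by (simp add: o_def)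
  then show ?thesis
    unfolding Tb_def[abs_def] by (intro continuous_intros)
qed

lemma isCont_funpow_nonzero:
  fixes f :: "'a::{zero, t2_space} \<Rightarrow> 'a"
  assumes "f 0 = 0" and "\<And>y. f y \<noteq> 0 \<Longrightarrow> isCont f y" and "(f ^^ n) x \<noteq> 0"
  shows "isCont (f ^^ n) x"
  using assms(3)
proof (induction n)
  case 0
  then show ?case by simp
next
  case (Suc n)
  then have "(f ^^ n) x \<noteq> 0" using assms(1) by auto
  with Suc show ?case
    using assms(2) continuous_at_compose[of x "f ^^ n" f] by (simp add: o_def)
qed

lemma Kset_locally_constant:
  assumes t: "0 < t" "t < 1" and n: "(Tb b ^^ n) t \<in> {0<..<t}"
  shows "\<exists>e>0. \<forall>t'. \<bar>t' - t\<bar> < e \<longrightarrow> Kset b t' = Kset b t"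
proof -
  define \<eta> where "\<eta> = (t - (Tb b ^^ n) t) / 2"
  have \<eta>: "0 < \<eta>" "(Tb b ^^ n) t \<in> {0<..<t - \<eta>}"
    using n by (auto simp: \<eta>_def field_simps)
  have "isCont (Tb b ^^ n) t"
    using n by (intro isCont_funpow_nonzero isCont_Tb) auto
  then have "\<forall>\<^sub>F x in nhds t. (Tb b ^^ n) x \<in> {0<..<t - \<eta>}"
    using \<eta>(2) by (intro topological_tendstoD) (auto simp: isCont_def tendsto_at_iff_tendsto_nhds)
  then obtain d where d: "d > 0" "\<And>x. \<bar>x - t\<bar> < d \<Longrightarrow> (Tb b ^^ n) x \<in> {0<..<t - \<eta>}"
    by (auto simp: eventually_nhds_metric dist_real_def)
  define e where "e = min d (min \<eta> (1 - t))"
  have e: "e > 0" using d \<eta> t by (simp add: e_def)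
  \<comment> \<open>An orbit point in (0,a) but not in (0,a') is near t, so n more steps move it below a'.\<close>
  have hit_transfer: "\<exists>k. (Tb b ^^ k) x \<in> {0<..<a'}"
    if "\<bar>a - t\<bar> < e" "\<bar>a' - t\<bar> < e" and "(Tb b ^^ k) x \<in> {0<..<a}" for x a a' k
  proof (cases "(Tb b ^^ k) x < a'")
    case True
    then show ?thesis using that(3) by auto
  next
    case False
    then have "\<bar>(Tb b ^^ k) x - t\<bar> < d" using that by (auto simp: e_def)
    then have "(Tb b ^^ (n + k)) x \<in> {0<..<a'}"
      using d(2) that(2) by (fastforce simp: funpow_add e_def)
    then show ?thesis by blast
  qed
  have "Kset b t' = Kset b t" if "\<bar>t' - t\<bar> < e" for t'
  proof -
    have "\<bar>t' - t\<bar> < \<eta>" "\<bar>t' - t\<bar> < 1 - t" using that by (simp_all add: e_def)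
    moreover have "\<eta> < t" using n by (simp add: \<eta>_def)
    ultimately have t': "0 < t'" "t' < 1" by linarith+
    have "(\<exists>k. (Tb b ^^ k) x \<in> {0<..<t'}) \<longleftrightarrow> (\<exists>k. (Tb b ^^ k) x \<in> {0<..<t})" for x
      using hit_transfer[where a=t' and a'=t] hit_transfer[where a=t and a'=t'] that e by auto
    then show ?thesis
      unfolding set_eq_iff Kset_iff[OF t'] Kset_iff[OF t] by blast
  qed
  with e show ?thesis by blast
qed

lemma Kset_ne_Kset_zero:
  assumes "0 < t'" "t' \<le> 1"
  shows "Kset b t' \<noteq> Kset b 0"
proof -
  have "t' / 2 \<notin> Kset b t'"
    using assms by (cases "t' = 1") (auto simp: Kset_def intro: exI[of _ 0])
  moreover have "t' / 2 \<in> Kset b 0"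
    using assms by (simp add: Kset_def)
  ultimately show ?thesis by blast
qed

lemma Kset_self_imp_Ebeta:
  assumes "0 \<le> t" "t < 1" and "t \<in> Kset b t"
  shows "t \<in> Ebeta b"
proof -
  have "Kset b t' \<noteq> Kset b t" if "t' \<in> {0..1}" "t < t'" for t'
  proof (cases "t = 0")
    case True
    then show ?thesis using that Kset_ne_Kset_zero by simp
  next
    case False
    then have "t \<notin> Kset b t'"
      using that assms by (cases "t' = 1") (auto simp: Kset_def intro: exI[of _ 0])
    with assms(3) show ?thesis by blast
  qed
  with assms show ?thesis by (auto simp: Ebeta_def)
qed

lemma Ebeta_subset_Ubeta: "Ebeta b \<subseteq> Ubeta b"
proof
  fix t assume t: "t \<in> Ebeta b"
  have "\<exists>t'\<in>{0..1}. t - \<delta> < t' \<and> t' < t + \<delta> \<and> Kset b t' \<noteq> Kset b t" if "\<delta> > 0" for \<delta>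
  proof -
    define t' where "t' = min (t + \<delta> / 2) 1"
    have "t' \<in> {0..1}" "t < t'" "t - \<delta> < t'" "t' < t + \<delta>"
      using t that by (auto simp: t'_def Ebeta_def)
    with t show ?thesis unfolding Ebeta_def by blast
  qed
  with t show "t \<in> Ubeta b" by (auto simp: Ubeta_def Ebeta_def bifurcation_def)
qed

lemma Ubeta_imp_Kset_self:
  assumes "t \<in> Ubeta b"
  shows "t \<in> Kset b t"
proof (rule ccontr)
  assume not_in: "t \<notin> Kset b t"
  have "t \<noteq> 0" using not_in by (auto simp: Kset_def)
  with assms have t: "0 < t" "t < 1" by (simp_all add: Ubeta_def)
  then obtain n where "(Tb b ^^ n) t \<in> {0<..<t}"
    using not_in by (auto simp: Kset_iff)
  then obtain e where e: "e > 0" "\<And>t'. \<bar>t' - t\<bar> < e \<Longrightarrow> Kset b t' = Kset b t"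
    using Kset_locally_constant[OF t] by blast
  have "bifurcation b t" using assms by (simp add: Ubeta_def)
  then have "\<exists>t'. t - e < t' \<and> t' < t + e \<and> Kset b t' \<noteq> Kset b t"
    using e(1) t unfolding bifurcation_def by blast
  then obtain t' where "t - e < t'" "t' < t + e" "Kset b t' \<noteq> Kset b t"
    by blast
  with e(2)[of t'] show False by (auto simp: abs_less_iff)
qed

theorem mainTheorem3:
  fixes \<beta> t :: real
  assumes "\<beta> > 1" and "0 \<le> t" and "t < 1"
  shows "(t \<in> Kset \<beta> t \<longleftrightarrow> t \<in> Ebeta \<beta>) \<and> (t \<in> Ebeta \<beta> \<longleftrightarrow> t \<in> Ubeta \<beta>)"
  using Kset_self_imp_Ebeta[OF assms(2,3)] Ebeta_subset_Ubeta Ubeta_imp_Kset_self by blast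

end
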